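(* Let $\theta\in(0,\infty)$ and let $\mathbf c^L$ be a feasible consumption plan with $|c^L_t(W^t)|\le C<\infty$ almost surely for all $t$. In the SP-MA minimization problem it suffices to minimize over distortion sequences $(m_t)_t\in\mathbb M$, where $$\mathbb M=\Big\{(m_t)_t: m_t\in\mathcal M\ \text{and}\ \sum_{j=0}^\infty\gamma^j E\Big[\frac{M_{t+j}(W^{t+j})}{M_t(w^t)}\,\mathcal E[m_{t+j+1}(\cdot\mid W^{t+j})](Y_{t+j})\,\Big|\,w^t\Big]\le C_{C,\gamma,\theta}\ \ \forall (t,w^t)\Big\},$$ with $C_{C,\gamma,\theta}=\frac{2C}{(1-\gamma)\theta\gamma}$; that is, restricting the minimization in the SP-MA to $\mathbb M$ does not change its value (a minimizing sequence lies in $\mathbb M$).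
   Context: Let $(Y_t)$ be a Markov chain on a finite set $\mathbb Y\subseteq\mathbb R_+$ with transition matrix $P_{Y'|Y}$, $(X_t)$ i.i.d. with law $P_X$ independent of $(Y_t)$, $W_t=(X_t,Y_t)$, $W^t=(W_0,\dots,W_t)$, $\mathcal W^t$ the $\sigma$-algebra generated by $W^t$, and $P$ the induced law on histories; $E[\cdot\mid w^t]$ is conditional expectation under $P$ given $W^t=w^t$. A feasible consumption plan is a sequence of $\mathcal W^t$-measurable functions $c^L_t$. Let $\gamma\in(0,1)$. $\mathcal M=\{g:\mathbb Y\to\mathbb R_+:\sum_{y'}g(y')P_{Y'|Y}(y'\mid y)=1\ \forall y\}$, and for $g\in\mathcal M$, $\mathcal E[g](y)=\sum_{y'}g(y')\log g(y')\,P_{Y'|Y}(y'\mid y)$. A distortion sequence is $(m_{t+1})_t$ with $m_{t+1}(\cdot\mid w^t)\in\mathcal M$; $M_0=1$, $M_t=\prod_{\tau=1}^t m_\tau$. The SP-MA minimization problem at $(t,w^t)$ is $$\min_{(m_{t+j+1})_j}\sum_{j=0}^\infty\gamma^j E\Big[\frac{M_{t+j}(W^{t+j})}{M_t(w^t)}\big\{c^L_{t+j}(W^{t+j})+\theta\gamma\,\mathcal E[m_{t+j+1}(\cdot\mid W^{t+j})](Y_{t+j})\big\}\,\Big|\,w^t\Big],$$ and its minimum is assumed to be attained. *)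

theory Defs
  imports "HOL-Probability.Probability"
begin

text \<open>Histories w^t = (W_0,...,W_t) are lists of pairs (x,y) of length t+1.
  Parameters: Y (finite state set of the chain), P (P y y' = P_{Y'|Y}(y'|y)),
  MX (law P_X of the X_t on a measurable space).\<close>

definition hist :: "real set \<Rightarrow> 'x measure \<Rightarrow> nat \<Rightarrow> ('x \<times> real) list set" where
  "hist Y MX n = {h. length h = n \<and> (\<forall>w\<in>set h. fst w \<in> space MX \<and> snd w \<in> Y)}"

definition inM :: "real set \<Rightarrow> (real \<Rightarrow> real \<Rightarrow> real) \<Rightarrow> (real \<Rightarrow> real) \<Rightarrow> bool" where
  "inM Y P g \<longleftrightarrow> (\<forall>y'\<in>Y. 0 \<le> g y') \<and> (\<forall>y\<in>Y. (\<Sum>y'\<in>Y. g y' * P y y') = 1)"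

definition Ent :: "real set \<Rightarrow> (real \<Rightarrow> real \<Rightarrow> real) \<Rightarrow> (real \<Rightarrow> real) \<Rightarrow> real \<Rightarrow> real" where
  "Ent Y P g y = (\<Sum>y'\<in>Y. g y' * ln (g y') * P y y')"

text \<open>One-step conditional expectation under P of a nonnegative function of W^{n+1},
  given W^n = h: X_{n+1} ~ P_X independent, Y_{n+1} ~ P(.|y_n).\<close>
definition Enext :: "real set \<Rightarrow> (real \<Rightarrow> real \<Rightarrow> real) \<Rightarrow> 'x measure
    \<Rightarrow> (('x \<times> real) list \<Rightarrow> ennreal) \<Rightarrow> ('x \<times> real) list \<Rightarrow> ennreal" where
  "Enext Y P MX F h =
     (\<integral>\<^sup>+ x. (\<Sum>y'\<in>Y. ennreal (P (snd (last h)) y') * F (h @ [(x, y')])) \<partial>MX)"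

text \<open>E[F(W^{t+j}) | W^t = h] for nonnegative F.\<close>
definition Ecnd :: "real set \<Rightarrow> (real \<Rightarrow> real \<Rightarrow> real) \<Rightarrow> 'x measure \<Rightarrow> nat
    \<Rightarrow> (('x \<times> real) list \<Rightarrow> ennreal) \<Rightarrow> ('x \<times> real) list \<Rightarrow> ennreal" where
  "Ecnd Y P MX j F = (Enext Y P MX ^^ j) F"

definition cE :: "real set \<Rightarrow> (real \<Rightarrow> real \<Rightarrow> real) \<Rightarrow> 'x measure \<Rightarrow> nat
    \<Rightarrow> (('x \<times> real) list \<Rightarrow> real) \<Rightarrow> ('x \<times> real) list \<Rightarrow> ereal" where
  "cE Y P MX j F h =
     enn2ereal (Ecnd Y P MX j (\<lambda>h'. ennreal (F h')) h)
     - enn2ereal (Ecnd Y P MX j (\<lambda>h'. ennreal (- F h')) h)"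

text \<open>Distortion sequences: m (Suc t) h y' = m_{t+1}(y' | w^t) with h = w^t (length t+1);
  m 0 is unused.  M_{t+j}/M_t along a history h' of length t+j+1.\<close>
definition relM :: "(nat \<Rightarrow> ('x \<times> real) list \<Rightarrow> real \<Rightarrow> real) \<Rightarrow> nat \<Rightarrow> nat
    \<Rightarrow> ('x \<times> real) list \<Rightarrow> real" where
  "relM m t j h' = (\<Prod>\<tau>\<in>{Suc t..t+j}. m \<tau> (take \<tau> h') (snd (h' ! \<tau>)))"

text \<open>The \<sigma>-algebra of W^{n-1} = (W_0,..,W_{n-1}) on histories of length n:
  f is W^{n-1}-measurable iff this composite is measurable.\<close>
definition hist_measurable :: "real set \<Rightarrow> 'x measure \<Rightarrow> nat \<Rightarrow> (('x \<times> real) list \<Rightarrow> real) \<Rightarrow> bool" where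
  "hist_measurable Y MX n f \<longleftrightarrow>
     (\<lambda>w. f (map w [0..<n])) \<in> borel_measurable (PiM {..<n} (\<lambda>_. MX \<Otimes>\<^sub>M count_space Y))"

definition Dist :: "real set \<Rightarrow> (real \<Rightarrow> real \<Rightarrow> real) \<Rightarrow> 'x measure
    \<Rightarrow> (nat \<Rightarrow> ('x \<times> real) list \<Rightarrow> real \<Rightarrow> real) set" where
  "Dist Y P MX = {m. \<forall>t. (\<forall>h\<in>hist Y MX (Suc t). inM Y P (m (Suc t) h))
      \<and> (\<forall>y'\<in>Y. hist_measurable Y MX (Suc t) (\<lambda>h. m (Suc t) h y'))}"

definition DS :: "real set \<Rightarrow> (real \<Rightarrow> real \<Rightarrow> real) \<Rightarrow> 'x measure \<Rightarrow> real
    \<Rightarrow> (nat \<Rightarrow> ('x \<times> real) list \<Rightarrow> real) \<Rightarrow> ('x \<times> real) list \<Rightarrow> ereal" where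
  "DS Y P MX \<gamma> g h = (\<Sum>j. ereal (\<gamma> ^ j) * cE Y P MX j (g j) h)"

definition SPMA :: "real set \<Rightarrow> (real \<Rightarrow> real \<Rightarrow> real) \<Rightarrow> 'x measure \<Rightarrow> real \<Rightarrow> real
    \<Rightarrow> (nat \<Rightarrow> ('x \<times> real) list \<Rightarrow> real) \<Rightarrow> nat
    \<Rightarrow> (nat \<Rightarrow> ('x \<times> real) list \<Rightarrow> real \<Rightarrow> real) \<Rightarrow> ('x \<times> real) list \<Rightarrow> ereal" where
  "SPMA Y P MX \<gamma> \<theta> c t m h = DS Y P MX \<gamma>
     (\<lambda>j h'. relM m t j h' * (c (t+j) h' + \<theta> * \<gamma> * Ent Y P (m (Suc (t+j)) h') (snd (last h')))) h"

definition MM :: "real set \<Rightarrow> (real \<Rightarrow> real \<Rightarrow> real) \<Rightarrow> 'x measure \<Rightarrow> real \<Rightarrow> real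
    \<Rightarrow> (nat \<Rightarrow> ('x \<times> real) list \<Rightarrow> real \<Rightarrow> real) set" where
  "MM Y P MX \<gamma> K = {m \<in> Dist Y P MX. \<forall>t. \<forall>h\<in>hist Y MX (Suc t).
      DS Y P MX \<gamma> (\<lambda>j h'. relM m t j h' * Ent Y P (m (Suc (t+j)) h') (snd (last h'))) h \<le> ereal K}"

end

theory Submission
  imports Defs
begin

text \<open>Let \<open>m\<^sup>*\<close> be an SP-MA minimiser at \<open>(t, w\<^sup>t)\<close>. Adding the constant \<open>C\<close> to the consumption
  makes every payoff nonnegative, so both objectives become values of nonnegative payoff streams
  and can be compared in \<open>[0, \<infinity>]\<close>. Comparing \<open>m\<^sup>*\<close> with the undistorted sequence \<open>m = 1\<close>
  (whose value is at most \<open>2C/(1 - \<gamma>)\<close>) shows that the discounted entropy of \<open>m\<^sup>*\<close> from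
  \<open>(t, w\<^sup>t)\<close> is at most \<open>K = 2C/((1 - \<gamma>)\<theta>\<gamma>)\<close>. Now stop \<open>m\<^sup>*\<close>: follow it until the first node at
  which its remaining discounted entropy exceeds \<open>K\<close>, and use \<open>m = 1\<close> from there on. At such a
  node switching costs at most \<open>2C/(1 - \<gamma>) = \<theta>\<gamma>K\<close>, less than the entropy cost alone of
  continuing with \<open>m\<^sup>*\<close>, so the stopped sequence is again a minimiser; and by construction its
  remaining entropy is at most \<open>K\<close> at every node, i.e. it lies in \<open>\<M>\<M>\<close>.\<close>

locale markov_histories =
  fixes Y :: "real set" and P :: "real \<Rightarrow> real \<Rightarrow> real" and MX :: "'x measure"
  assumes finite_Y: "finite Y"
    and P_nonneg: "\<And>y y'. y \<in> Y \<Longrightarrow> y' \<in> Y \<Longrightarrow> 0 \<le> P y y'"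
    and P_sum: "\<And>y. y \<in> Y \<Longrightarrow> (\<Sum>y'\<in>Y. P y y') = 1"
    and MX_prob: "prob_space MX"
begin

abbreviation "Hist \<equiv> hist Y MX"
abbreviation "step \<equiv> Enext Y P MX"
abbreviation "cexp \<equiv> Ecnd Y P MX"

lemma Hist_iff: "h \<in> Hist n \<longleftrightarrow> length h = n \<and> (\<forall>w\<in>set h. fst w \<in> space MX \<and> snd w \<in> Y)"
  by (simp add: hist_def)

lemma Hist_snoc: "h \<in> Hist n \<Longrightarrow> x \<in> space MX \<Longrightarrow> y \<in> Y \<Longrightarrow> h @ [(x,y)] \<in> Hist (Suc n)"
  by (auto simp: Hist_iff)

lemma Hist_take: "h \<in> Hist n \<Longrightarrow> k \<le> n \<Longrightarrow> take k h \<in> Hist k"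
  by (auto simp: Hist_iff dest: in_set_takeD)

lemma Hist_last: "h \<in> Hist (Suc n) \<Longrightarrow> snd (last h) \<in> Y"
  by (auto simp: Hist_iff) (metis last_in_set list.size(3) nat.distinct(1))

lemma Hist_nth: "h \<in> Hist n \<Longrightarrow> i < n \<Longrightarrow> snd (h ! i) \<in> Y \<and> fst (h ! i) \<in> space MX"
  by (auto simp: Hist_iff)

lemma cexp_0: "cexp 0 F h = F h"
  by (simp add: Ecnd_def)

lemma cexp_Suc: "cexp (Suc j) F h = step (cexp j F) h"
  by (simp add: Ecnd_def)

lemma step_eq: "step F h = (\<integral>\<^sup>+ x. (\<Sum>y'\<in>Y. ennreal (P (snd (last h)) y') * F (h @ [(x, y')])) \<partial>MX)"
  by (simp add: Enext_def)

lemma step_mono: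
  assumes "h \<in> Hist n" "\<And>x y. x \<in> space MX \<Longrightarrow> y \<in> Y \<Longrightarrow> F (h @ [(x,y)]) \<le> G (h @ [(x,y)])"
  shows "step F h \<le> step G h"
  unfolding step_eq using assms
  by (intro nn_integral_mono sum_mono mult_left_mono) auto

lemma step_cong:
  assumes "h \<in> Hist n" "\<And>x y. x \<in> space MX \<Longrightarrow> y \<in> Y \<Longrightarrow> F (h @ [(x,y)]) = G (h @ [(x,y)])"
  shows "step F h = step G h"
  using step_mono[OF assms(1), of F G] step_mono[OF assms(1), of G F] assms(2) by (simp add: antisym)

lemma step_const:
  assumes "h \<in> Hist (Suc n)"
  shows "step (\<lambda>_. a) h = a"
proof -
  interpret prob_space MX by (rule MX_prob)
  have y: "snd (last h) \<in> Y" using Hist_last assms by blast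
  have "(\<Sum>y'\<in>Y. ennreal (P (snd (last h)) y') * a) = ennreal (\<Sum>y'\<in>Y. P (snd (last h)) y') * a"
    using P_nonneg y by (simp add: sum_distrib_right[symmetric] sum_ennreal)
  also have "\<dots> = a" using P_sum y by simp
  finally show ?thesis unfolding step_eq by (simp add: emeasure_space_1)
qed

lemma cexp_zero: "cexp j (\<lambda>_. 0) r = 0"
  by (induction j arbitrary: r) (simp_all add: cexp_0 cexp_Suc step_eq)

lemma cexp_mono:
  assumes "h \<in> Hist n" "\<And>h'. h' \<in> Hist (n + j) \<Longrightarrow> take n h' = h \<Longrightarrow> F h' \<le> G h'"
  shows "cexp j F h \<le> cexp j G h"
  using assms
proof (induction j arbitrary: n h)
  case 0
  then show ?case by (simp add: cexp_0 Hist_iff)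
next
  case (Suc j)
  show ?case unfolding cexp_Suc
  proof (rule step_mono[OF Suc.prems(1)])
    fix x y assume xy: "x \<in> space MX" "y \<in> Y"
    show "cexp j F (h @ [(x, y)]) \<le> cexp j G (h @ [(x, y)])"
    proof (rule Suc.IH[where n="Suc n"])
      show "h @ [(x, y)] \<in> Hist (Suc n)" using Hist_snoc Suc.prems(1) xy by blast
      fix h' assume "h' \<in> Hist (Suc n + j)" "take (Suc n) h' = h @ [(x, y)]"
      moreover have "take n h' = h"
        using calculation Suc.prems(1) by (metis Hist_iff butlast_snoc butlast_take diff_Suc_1 le_add1)
      ultimately show "F h' \<le> G h'" using Suc.prems(2) by simp
    qed
  qed
qed

lemma cexp_cong:
  assumes "h \<in> Hist n" "\<And>h'. h' \<in> Hist (n + j) \<Longrightarrow> take n h' = h \<Longrightarrow> F h' = G h'"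
  shows "cexp j F h = cexp j G h"
  using cexp_mono[OF assms(1), of j F G] cexp_mono[OF assms(1), of j G F] assms(2) by (simp add: antisym)

lemma cexp_const:
  assumes "h \<in> Hist (Suc n)"
  shows "cexp j (\<lambda>_. a) h = a"
  using assms
proof (induction j arbitrary: n h)
  case 0 then show ?case by (simp add: cexp_0)
next
  case (Suc j)
  have "cexp (Suc j) (\<lambda>_. a) h = step (\<lambda>_. a) h"
    unfolding cexp_Suc by (rule step_cong[OF Suc.prems]) (use Suc.IH[OF Hist_snoc[OF Suc.prems]] in auto)
  then show ?case using step_const Suc.prems by simp
qed

definition "coord_space = MX \<Otimes>\<^sub>M count_space Y"
definition "path_space n = PiM {..<n} (\<lambda>_. coord_space)"

definition adapted :: "nat \<Rightarrow> (('x \<times> real) list \<Rightarrow> 'b::topological_space) \<Rightarrow> bool" where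
  "adapted n F \<longleftrightarrow> (\<lambda>w. F (map w [0..<n])) \<in> borel_measurable (path_space n)"

lemma hist_measurable_iff_adapted: "hist_measurable Y MX n f \<longleftrightarrow> adapted n f"
  by (simp add: hist_measurable_def adapted_def path_space_def coord_space_def)

lemma space_coord_space: "space coord_space = space MX \<times> Y"
  by (simp add: coord_space_def space_pair_measure)

lemma map_upt_snoc:
  "map (\<lambda>i. if i < n then w i else if i = n then z else u i) [0..<Suc n] = map w [0..<n] @ [z]"
  by (intro nth_equalityI) (auto simp: nth_append)

lemma measurable_extend_path:
  assumes h: "h \<in> Hist n" and y: "y \<in> Y"
  shows "(\<lambda>x i. if i < n then h ! i else if i = n then (x, y) else undefined) \<in> measurable MX (path_space (Suc n))"
  unfolding path_space_def
proof (rule measurable_PiM_single')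
  fix i assume "i \<in> {..<Suc n}"
  show "(\<lambda>x. if i < n then h ! i else if i = n then (x, y) else undefined) \<in> measurable MX coord_space"
  proof (cases "i < n")
    case True
    then have "h ! i \<in> space coord_space" using Hist_nth[OF h True] by (simp add: space_coord_space mem_Times_iff)
    then show ?thesis using True by simp
  next
    case False
    then show ?thesis using \<open>i \<in> {..<Suc n}\<close> y unfolding coord_space_def by simp
  qed
next
  show "(\<lambda>x i. if i < n then h ! i else if i = n then (x, y) else undefined) \<in> space MX \<rightarrow> (\<Pi>\<^sub>E i\<in>{..<Suc n}. space coord_space)"
    using h y by (auto simp: space_coord_space Hist_iff PiE_def extensional_def mem_Times_iff)
qed

lemma adapted_section:
  assumes h: "h \<in> Hist n" and y: "y \<in> Y" and F: "adapted (Suc n) F"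
  shows "(\<lambda>x. F (h @ [(x, y)])) \<in> borel_measurable MX"
proof -
  have "length h = n" using h by (simp add: Hist_iff)
  then have eq: "map (\<lambda>i. if i < n then h ! i else if i = n then (x, y) else undefined) [0..<Suc n] = h @ [(x, y)]" for x
    by (intro nth_equalityI) (auto simp: nth_append)
  show ?thesis
    using measurable_comp[OF measurable_extend_path[OF h y] F[unfolded adapted_def]] unfolding comp_def eq .
qed

lemma measurable_extend_path_pair:
  assumes y: "y \<in> Y"
  shows "(\<lambda>(w, x) i. if i < n then w i else if i = n then (x, y) else undefined)
    \<in> measurable (path_space n \<Otimes>\<^sub>M MX) (path_space (Suc n))"
proof -
  have "(\<lambda>p i. if i < n then fst p i else if i = n then (snd p, y) else undefined)
      \<in> measurable (path_space n \<Otimes>\<^sub>M MX) (path_space (Suc n))"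
    unfolding path_space_def
  proof (rule measurable_PiM_single')
    fix i assume "i \<in> {..<Suc n}"
    then show "(\<lambda>p. if i < n then fst p i else if i = n then (snd p, y) else undefined)
        \<in> measurable (Pi\<^sub>M {..<n} (\<lambda>_. coord_space) \<Otimes>\<^sub>M MX) coord_space"
      using y unfolding coord_space_def by (cases "i < n") simp_all
  next
    show "(\<lambda>p i. if i < n then fst p i else if i = n then (snd p, y) else undefined)
        \<in> space (Pi\<^sub>M {..<n} (\<lambda>_. coord_space) \<Otimes>\<^sub>M MX) \<rightarrow> (\<Pi>\<^sub>E i\<in>{..<Suc n}. space coord_space)"
      using y by (auto simp: space_pair_measure space_coord_space PiE_def extensional_def Pi_def space_PiM)
  qed
  then show ?thesis by (simp add: case_prod_beta')
qed

lemma adapted_coord: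
  assumes "i < n"
  shows "(\<lambda>w. snd (w i)) \<in> measurable (path_space n) (count_space Y)"
proof -
  have "(\<lambda>w. w i) \<in> measurable (path_space n) coord_space"
    unfolding path_space_def using assms by simp
  then show ?thesis unfolding coord_space_def using measurable_compose measurable_snd by blast
qed

lemma adapted_step:
  assumes F: "adapted (Suc n) F" and n: "1 \<le> n"
  shows "adapted n (step F)"
proof -
  interpret prob_space MX by (rule MX_prob)
  obtain k where k: "n = Suc k" using n by (cases n) auto
  have last_eq: "snd (last (map w [0..<n])) = snd (w k)" for w :: "nat \<Rightarrow> 'x \<times> real"
    using k by simp
  have Pm: "(\<lambda>p. ennreal (P (snd (fst p k)) y')) \<in> borel_measurable (path_space n \<Otimes>\<^sub>M MX)" for y'
  proof -
    have "(\<lambda>y. ennreal (P y y')) \<in> measurable (count_space Y) borel"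
      by (rule measurable_count_space_eq1[THEN iffD2]) simp
    then have "(\<lambda>w. ennreal (P (snd (w k)) y')) \<in> borel_measurable (path_space n)"
      using measurable_compose[OF adapted_coord] k by blast
    then show ?thesis using measurable_compose[OF measurable_fst] by blast
  qed
  have Fm: "(\<lambda>p. F (map (fst p) [0..<n] @ [(snd p, y')])) \<in> borel_measurable (path_space n \<Otimes>\<^sub>M MX)"
    if "y' \<in> Y" for y'
  proof -
    have eq: "map ((\<lambda>(w, x) i. if i < n then w i else if i = n then (x, y') else undefined) p) [0..<Suc n]
        = map (fst p) [0..<n] @ [(snd p, y')]" for p
      by (cases p) (simp only: case_prod_conv map_upt_snoc fst_conv snd_conv)
    show ?thesis
      using measurable_compose[OF measurable_extend_path_pair[OF that, of n] F[unfolded adapted_def]]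
      by (simp only: eq)
  qed
  have "(\<lambda>p. \<Sum>y'\<in>Y. ennreal (P (snd (fst p k)) y') * F (map (fst p) [0..<n] @ [(snd p, y')]))
      \<in> borel_measurable (path_space n \<Otimes>\<^sub>M MX)"
    using Pm Fm by (intro borel_measurable_sum borel_measurable_times_ennreal)
  then have "case_prod (\<lambda>w x. \<Sum>y'\<in>Y. ennreal (P (snd (w k)) y') * F (map w [0..<n] @ [(x, y')]))
      \<in> borel_measurable (path_space n \<Otimes>\<^sub>M MX)"
    by (simp add: case_prod_beta')
  from borel_measurable_nn_integral[OF this]
  show ?thesis unfolding adapted_def step_eq last_eq .
qed

lemma adapted_cexp:
  assumes "adapted (n + j) F" "1 \<le> n"
  shows "adapted n (cexp j F)"
  using assms
proof (induction j arbitrary: n)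
  case 0 then show ?case by (simp add: cexp_0[abs_def])
next
  case (Suc j)
  have "adapted (Suc n) (cexp j F)" using Suc.IH[of "Suc n"] Suc.prems by simp
  then show ?case using adapted_step Suc.prems(2) by (simp add: cexp_Suc[abs_def])
qed

lemma adapted_take:
  assumes "k \<le> n" "adapted k G"
  shows "adapted n (\<lambda>h. G (take k h))"
proof -
  have r: "(\<lambda>w. restrict w {..<k}) \<in> measurable (path_space n) (path_space k)"
    unfolding path_space_def by (rule measurable_restrict_subset) (use assms(1) in auto)
  have eq: "map (restrict w {..<k}) [0..<k] = take k (map w [0..<n])" for w :: "nat \<Rightarrow> 'x \<times> real"
    using assms(1) by (intro nth_equalityI) auto
  show ?thesis
    using measurable_compose[OF r assms(2)[unfolded adapted_def]] unfolding adapted_def eq .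
qed

lemma adapted_comp_coord:
  assumes "i < n" "\<And>y. y \<in> Y \<Longrightarrow> adapted n (G y)"
  shows "adapted n (\<lambda>h. G (snd (h ! i)) h)"
proof -
  have "(\<lambda>w. (\<lambda>y w. G y (map w [0..<n])) (snd (w i)) w) \<in> borel_measurable (path_space n)"
    by (rule measurable_compose_countable'[OF _ adapted_coord[OF assms(1)]])
       (use assms(2) finite_Y in \<open>auto simp: adapted_def intro: countable_finite\<close>)
  then show ?thesis unfolding adapted_def using assms(1) by simp
qed

lemma adapted_comp_last:
  assumes "\<And>y. y \<in> Y \<Longrightarrow> adapted (Suc k) (G y)"
  shows "adapted (Suc k) (\<lambda>h. G (snd (last h)) h)"
proof -
  have "adapted (Suc k) (\<lambda>h. G (snd (h ! k)) h)" by (rule adapted_comp_coord) (use assms in auto)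
  moreover have "(\<lambda>w. G (snd (last (map w [0..<Suc k]))) (map w [0..<Suc k]))
      = (\<lambda>w. G (snd (map w [0..<Suc k] ! k)) (map w [0..<Suc k]))"
    by (simp add: nth_append)
  ultimately show ?thesis unfolding adapted_def by simp
qed

lemma adapted_const: "adapted n (\<lambda>_. c)"
  by (simp add: adapted_def)

lemma adapted_add: "adapted n f \<Longrightarrow> adapted n g \<Longrightarrow> adapted n (\<lambda>h. f h + (g h :: real))"
  unfolding adapted_def by (rule borel_measurable_add)

lemma adapted_uminus: "adapted n f \<Longrightarrow> adapted n (\<lambda>h. - (f h :: real))"
  unfolding adapted_def by (rule borel_measurable_uminus)

lemma adapted_mult: "adapted n f \<Longrightarrow> adapted n g \<Longrightarrow> adapted n (\<lambda>h. f h * (g h :: real))"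
  unfolding adapted_def by (rule borel_measurable_times)

lemma adapted_mult_ennreal: "adapted n f \<Longrightarrow> adapted n g \<Longrightarrow> adapted n (\<lambda>h. f h * (g h :: ennreal))"
  unfolding adapted_def by (rule borel_measurable_times_ennreal)

lemma adapted_ennreal: "adapted n f \<Longrightarrow> adapted n (\<lambda>h. ennreal (f h))"
  unfolding adapted_def by simp

lemma adapted_sum: "(\<And>i. i \<in> I \<Longrightarrow> adapted n (f i)) \<Longrightarrow> adapted n (\<lambda>h. \<Sum>i\<in>I. (f i h :: real))"
  unfolding adapted_def by (rule borel_measurable_sum)

lemma adapted_prod: "(\<And>i. i \<in> I \<Longrightarrow> adapted n (f i)) \<Longrightarrow> adapted n (\<lambda>h. \<Prod>i\<in>I. (f i h :: real))"
  unfolding adapted_def by (rule borel_measurable_prod)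

lemma adapted_ln: "adapted n f \<Longrightarrow> adapted n (\<lambda>h. ln (f h :: real))"
  unfolding adapted_def by (rule borel_measurable_ln)

lemma adapted_suminf_ennreal: "(\<And>i. adapted n (f i)) \<Longrightarrow> adapted n (\<lambda>h. \<Sum>i. (f i h :: ennreal))"
  unfolding adapted_def by (rule borel_measurable_suminf_order)

lemma step_integrand_measurable:
  assumes h: "h \<in> Hist n" and F: "adapted (Suc n) F"
  shows "(\<lambda>x. \<Sum>y'\<in>Y. ennreal (P (snd (last h)) y') * F (h @ [(x, y')])) \<in> borel_measurable MX"
  using adapted_section[OF h _ F] by (intro borel_measurable_sum borel_measurable_times_ennreal) auto

lemma step_add:
  assumes h: "h \<in> Hist n" and F: "adapted (Suc n) F" and G: "adapted (Suc n) G"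
  shows "step (\<lambda>r. F r + G r) h = step F h + step G h"
  unfolding step_eq distrib_left sum.distrib
  by (rule nn_integral_add[OF step_integrand_measurable[OF h F] step_integrand_measurable[OF h G]])

lemma step_cmult:
  assumes h: "h \<in> Hist n" and F: "adapted (Suc n) F"
  shows "step (\<lambda>r. c * F r) h = c * step F h"
  unfolding step_eq sum_distrib_left[symmetric] mult.left_commute[of _ c]
  by (rule nn_integral_cmult[OF step_integrand_measurable[OF h F]])

lemma step_suminf:
  assumes h: "h \<in> Hist n" and F: "\<And>i. adapted (Suc n) (F i)"
  shows "step (\<lambda>r. \<Sum>i. F i r) h = (\<Sum>i. step (F i) h)"
proof -
  have "(\<Sum>y'\<in>Y. ennreal (P (snd (last h)) y') * (\<Sum>i. F i (h @ [(x, y')])))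
      = (\<Sum>i. \<Sum>y'\<in>Y. ennreal (P (snd (last h)) y') * F i (h @ [(x, y')]))" for x
    by (simp only: ennreal_suminf_cmult[symmetric] suminf_sum[OF summableI, symmetric])
  then show ?thesis
    unfolding step_eq by (simp only:) (rule nn_integral_suminf[OF step_integrand_measurable[OF h F]])
qed

lemma cexp_add:
  assumes "h \<in> Hist n" "1 \<le> n" "adapted (n + j) F" "adapted (n + j) G"
  shows "cexp j (\<lambda>r. F r + G r) h = cexp j F h + cexp j G h"
  using assms
proof (induction j arbitrary: n h)
  case 0 then show ?case by (simp add: cexp_0)
next
  case (Suc j)
  have F: "adapted (Suc n + j) F" and G: "adapted (Suc n + j) G" using Suc.prems by simp_all
  have "cexp (Suc j) (\<lambda>r. F r + G r) h = step (\<lambda>r. cexp j F r + cexp j G r) h"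
    unfolding cexp_Suc
    by (rule step_cong[OF Suc.prems(1)], rule Suc.IH[OF Hist_snoc[OF Suc.prems(1)] _ F G]) simp_all
  also have "\<dots> = step (cexp j F) h + step (cexp j G) h"
    by (rule step_add[OF Suc.prems(1) adapted_cexp[OF F] adapted_cexp[OF G]]) simp_all
  finally show ?case by (simp add: cexp_Suc)
qed

lemma cexp_mult_prefix:
  assumes "h' \<in> Hist L'" "L \<le> L'" "take L h' = h" "1 \<le> L" "adapted (L' + j) G"
  shows "cexp j (\<lambda>r. a (take L r) * G r) h' = a h * cexp j G h'"
  using assms
proof (induction j arbitrary: L' h')
  case 0 then show ?case by (simp add: cexp_0)
next
  case (Suc j)
  have len: "length h' = L'" using Suc.prems(1) by (simp add: Hist_iff)
  have G: "adapted (Suc L' + j) G" using Suc.prems(5) by simp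
  have "cexp (Suc j) (\<lambda>r. a (take L r) * G r) h' = step (\<lambda>r. a h * cexp j G r) h'"
    unfolding cexp_Suc
  proof (rule step_cong[OF Suc.prems(1)])
    fix x y assume xy: "x \<in> space MX" "y \<in> Y"
    have "take L (h' @ [(x, y)]) = h" using Suc.prems(2,3) len by simp
    then show "cexp j (\<lambda>r. a (take L r) * G r) (h' @ [(x, y)]) = a h * cexp j G (h' @ [(x, y)])"
      using Suc.IH[OF Hist_snoc[OF Suc.prems(1) xy] _ _ Suc.prems(4) G] Suc.prems(2) by simp
  qed
  also have "\<dots> = a h * step (cexp j G) h'"
    by (rule step_cmult[OF Suc.prems(1) adapted_cexp[OF G]]) (use Suc.prems(2,4) in simp)
  finally show ?case by (simp add: cexp_Suc)
qed

lemma cexp_cmult: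
  assumes "h \<in> Hist n" "1 \<le> n" "adapted (n + j) F"
  shows "cexp j (\<lambda>r. c * F r) h = c * cexp j F h"
  using cexp_mult_prefix[OF assms(1) order.refl _ assms(2,3), where a="\<lambda>_. c"] assms(1)
  by (simp add: Hist_iff)


lemma Dist_nonneg: "m \<in> Dist Y P MX \<Longrightarrow> 1 \<le> \<tau> \<Longrightarrow> x \<in> Hist \<tau> \<Longrightarrow> y \<in> Y \<Longrightarrow> 0 \<le> m \<tau> x y"
  by (cases \<tau>) (auto simp: Dist_def inM_def)

lemma Dist_sum: "m \<in> Dist Y P MX \<Longrightarrow> 1 \<le> \<tau> \<Longrightarrow> x \<in> Hist \<tau> \<Longrightarrow> y \<in> Y \<Longrightarrow> (\<Sum>y'\<in>Y. m \<tau> x y' * P y y') = 1"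
  by (cases \<tau>) (auto simp: Dist_def inM_def)

lemma Dist_adapted: "m \<in> Dist Y P MX \<Longrightarrow> 1 \<le> \<tau> \<Longrightarrow> y \<in> Y \<Longrightarrow> adapted \<tau> (\<lambda>x. m \<tau> x y)"
  by (cases \<tau>) (auto simp: Dist_def hist_measurable_iff_adapted)

lemma one_in_Dist: "(\<lambda>_ _ _. 1) \<in> Dist Y P MX"
  by (auto simp: Dist_def inM_def P_sum hist_measurable_iff_adapted adapted_const)

lemma relM_0 [simp]: "relM m n 0 h = 1"
  by (simp add: relM_def)

lemma relM_1: "relM m n 1 h = m (Suc n) (take (Suc n) h) (snd (h ! Suc n))"
  by (simp add: relM_def)

lemma relM_Suc:
  assumes "Suc (Suc n) \<le> length h"
  shows "relM m n (Suc j) h = relM m n 1 (take (Suc (Suc n)) h) * relM m (Suc n) j h"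
proof -
  have "{Suc n..n + Suc j} = insert (Suc n) {Suc (Suc n)..Suc n + j}" by auto
  then show ?thesis unfolding relM_def using assms by (simp add: min_def)
qed

lemma relM_nonneg:
  assumes m: "m \<in> Dist Y P MX" and h: "h \<in> Hist (Suc n + j)"
  shows "0 \<le> relM m n j h"
  unfolding relM_def
proof (rule prod_nonneg)
  fix \<tau> assume "\<tau> \<in> {Suc n..n + j}"
  then show "0 \<le> m \<tau> (take \<tau> h) (snd (h ! \<tau>))"
    using Dist_nonneg[OF m _ Hist_take[OF h, of \<tau>]] Hist_nth[OF h, of \<tau>] by auto
qed

lemma relM_adapted:
  assumes m: "m \<in> Dist Y P MX"
  shows "adapted (Suc n + j) (relM m n j)"
  unfolding relM_def
proof (rule adapted_prod)
  fix \<tau> assume \<tau>: "\<tau> \<in> {Suc n..n + j}"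
  show "adapted (Suc n + j) (\<lambda>h. m \<tau> (take \<tau> h) (snd (h ! \<tau>)))"
    by (rule adapted_comp_coord[where G="\<lambda>y h. m \<tau> (take \<tau> h) y"])
       (use \<tau> in \<open>auto intro!: adapted_take Dist_adapted[OF m]\<close>)
qed

text \<open>Gibbs' inequality, from \<open>u - 1 \<le> u ln u\<close> and the normalisation of \<open>g\<close>.\<close>
lemma Ent_nonneg:
  assumes g: "\<And>y'. y' \<in> Y \<Longrightarrow> 0 \<le> g y'" and s: "(\<Sum>y'\<in>Y. g y' * P y y') = 1" and y: "y \<in> Y"
  shows "0 \<le> Ent Y P g y"
proof -
  have key: "u - 1 \<le> u * ln u" if "0 \<le> u" for u :: real
  proof (cases "u = 0")
    case False
    then have u: "0 < u" using that by simp
    have "- ln u \<le> 1/u - 1" using ln_le_minus_one[of "1/u"] u by (simp add: ln_div)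
    then have "u * (- ln u) \<le> u * (1/u - 1)" using u by (intro mult_left_mono) auto
    then show ?thesis using u by (simp add: algebra_simps)
  qed simp
  have "0 = (\<Sum>y'\<in>Y. (g y' - 1) * P y y')"
    using s P_sum[OF y] by (simp add: left_diff_distrib sum_subtractf)
  also have "\<dots> \<le> (\<Sum>y'\<in>Y. g y' * ln (g y') * P y y')"
    by (intro sum_mono mult_right_mono key g P_nonneg y)
  finally show ?thesis by (simp add: Ent_def)
qed

lemma Ent_one [simp]: "Ent Y P (\<lambda>_. 1) y = 0"
  by (simp add: Ent_def)

lemma Ent_Dist_nonneg:
  "m \<in> Dist Y P MX \<Longrightarrow> h \<in> Hist (Suc k) \<Longrightarrow> 0 \<le> Ent Y P (m (Suc k) h) (snd (last h))"
  by (rule Ent_nonneg) (auto intro: Dist_nonneg Dist_sum Hist_last)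

lemma Ent_adapted:
  assumes m: "m \<in> Dist Y P MX"
  shows "adapted (Suc k) (\<lambda>h. Ent Y P (m (Suc k) h) (snd (last h)))"
  unfolding Ent_def
  by (rule adapted_comp_last[where G="\<lambda>y h. \<Sum>y'\<in>Y. m (Suc k) h y' * ln (m (Suc k) h y') * P y y'"])
     (intro adapted_sum adapted_mult adapted_ln adapted_const Dist_adapted[OF m]; simp)

definition dvalue :: "real \<Rightarrow> (nat \<Rightarrow> ('x \<times> real) list \<Rightarrow> real \<Rightarrow> real)
    \<Rightarrow> (nat \<Rightarrow> ('x \<times> real) list \<Rightarrow> real) \<Rightarrow> nat \<Rightarrow> ('x \<times> real) list \<Rightarrow> ennreal" where
  "dvalue \<gamma> m e n r = (\<Sum>j. ennreal (\<gamma> ^ j) * cexp j (\<lambda>h'. ennreal (relM m n j h' * e (n + j) h')) r)"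

lemma weighted_payoff_adapted:
  assumes m: "m \<in> Dist Y P MX" and e: "\<And>k. adapted (Suc k) (e k)"
  shows "adapted (Suc n + j) (\<lambda>h'. ennreal (relM m n j h' * e (n + j) h'))"
  by (intro adapted_ennreal adapted_mult relM_adapted[OF m]) (use e[of "n + j"] in simp)

lemma cexp_weighted_payoff_Suc:
  assumes m: "m \<in> Dist Y P MX" and e: "\<And>k. adapted (Suc k) (e k)"
    and e_nonneg: "\<And>k h. h \<in> Hist (Suc k) \<Longrightarrow> 0 \<le> e k h" and r: "r \<in> Hist (Suc (Suc n))"
  shows "cexp j (\<lambda>h'. ennreal (relM m n (Suc j) h' * e (n + Suc j) h')) r
       = ennreal (relM m n 1 r) * cexp j (\<lambda>h'. ennreal (relM m (Suc n) j h' * e (Suc n + j) h')) r"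
proof -
  have "cexp j (\<lambda>h'. ennreal (relM m n (Suc j) h' * e (n + Suc j) h')) r
      = cexp j (\<lambda>h'. ennreal (relM m n 1 (take (Suc (Suc n)) h')) * ennreal (relM m (Suc n) j h' * e (Suc n + j) h')) r"
  proof (rule cexp_cong[OF r])
    fix h' assume h': "h' \<in> Hist (Suc (Suc n) + j)" "take (Suc (Suc n)) h' = r"
    have "Suc (Suc n) \<le> length h'" using h' by (simp add: Hist_iff)
    note split = relM_Suc[OF this]
    have "0 \<le> relM m n 1 (take (Suc (Suc n)) h')"
      using relM_nonneg[OF m, of "take (Suc (Suc n)) h'" n 1] Hist_take[OF h'(1), of "Suc (Suc n)"] by simp
    moreover have "0 \<le> relM m (Suc n) j h'" "0 \<le> e (Suc n + j) h'"
      using relM_nonneg[OF m, of h' "Suc n" j] e_nonneg[of h' "Suc n + j"] h' by simp_all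
    ultimately show "ennreal (relM m n (Suc j) h' * e (n + Suc j) h')
        = ennreal (relM m n 1 (take (Suc (Suc n)) h')) * ennreal (relM m (Suc n) j h' * e (Suc n + j) h')"
      using split by (simp add: ennreal_mult mult.assoc)
  qed
  also have "\<dots> = ennreal (relM m n 1 r) * cexp j (\<lambda>h'. ennreal (relM m (Suc n) j h' * e (Suc n + j) h')) r"
  proof (rule cexp_mult_prefix[OF r order.refl])
    show "take (Suc (Suc n)) r = r" using r by (simp add: Hist_iff)
    show "adapted (Suc (Suc n) + j) (\<lambda>h'. ennreal (relM m (Suc n) j h' * e (Suc n + j) h'))"
      using weighted_payoff_adapted[OF m e, of "Suc n" j] by simp
  qed simp
  finally show ?thesis .
qed

lemma step_relM_1:
  assumes m: "m \<in> Dist Y P MX" and h: "h \<in> Hist (Suc n)"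
  shows "step (\<lambda>r. ennreal (relM m n 1 r)) h = 1"
proof -
  have len: "length h = Suc n" using h by (simp add: Hist_iff)
  have y: "snd (last h) \<in> Y" using Hist_last[OF h] .
  have "step (\<lambda>r. ennreal (relM m n 1 r)) h
      = (\<integral>\<^sup>+ x. (\<Sum>y'\<in>Y. ennreal (P (snd (last h)) y') * ennreal (m (Suc n) h y')) \<partial>MX)"
    unfolding step_eq relM_1 using len by (simp add: nth_append)
  also have "\<dots> = (\<integral>\<^sup>+ x. ennreal (\<Sum>y'\<in>Y. m (Suc n) h y' * P (snd (last h)) y') \<partial>MX)"
    using Dist_nonneg[OF m _ h] P_nonneg[OF y]
    by (intro nn_integral_cong) (simp add: sum_ennreal[symmetric] ennreal_mult mult.commute)
  also have "\<dots> = 1"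
    using Dist_sum[OF m _ h y] prob_space.emeasure_space_1[OF MX_prob] by simp
  finally show ?thesis .
qed

lemma cexp_relM:
  assumes m: "m \<in> Dist Y P MX" and h: "h \<in> Hist (Suc n)"
  shows "cexp j (\<lambda>r. ennreal (relM m n j r)) h = 1"
  using h
proof (induction j arbitrary: n h)
  case 0 then show ?case by (simp add: cexp_0)
next
  case (Suc j)
  have "cexp (Suc j) (\<lambda>r. ennreal (relM m n (Suc j) r)) h = step (\<lambda>r. ennreal (relM m n 1 r)) h"
    unfolding cexp_Suc
  proof (rule step_cong[OF Suc.prems])
    fix x y assume xy: "x \<in> space MX" "y \<in> Y"
    note r = Hist_snoc[OF Suc.prems xy]
    have "cexp j (\<lambda>r. ennreal (relM m n (Suc j) r)) (h @ [(x, y)])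
        = ennreal (relM m n 1 (h @ [(x, y)])) * cexp j (\<lambda>r. ennreal (relM m (Suc n) j r)) (h @ [(x, y)])"
      using cexp_weighted_payoff_Suc[where e="\<lambda>_ _. 1" and j=j, OF m adapted_const zero_le_one r]
      by (simp only: mult_1_right)
    then show "cexp j (\<lambda>r. ennreal (relM m n (Suc j) r)) (h @ [(x, y)]) = ennreal (relM m n 1 (h @ [(x, y)]))"
      by (simp only: Suc.IH[OF r] mult_1_right)
  qed
  then show ?case using step_relM_1[OF m Suc.prems] by simp
qed

lemma dvalue_term_Suc:
  assumes m: "m \<in> Dist Y P MX" and e: "\<And>k. adapted (Suc k) (e k)"
    and e_nonneg: "\<And>k h. h \<in> Hist (Suc k) \<Longrightarrow> 0 \<le> e k h" and \<gamma>: "0 \<le> \<gamma>" and r: "r \<in> Hist (Suc n)"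
  shows "ennreal (\<gamma> ^ Suc j) * cexp (Suc j) (\<lambda>h'. ennreal (relM m n (Suc j) h' * e (n + Suc j) h')) r
    = ennreal \<gamma> * step (\<lambda>r'. ennreal (relM m n 1 r')
        * (ennreal (\<gamma> ^ j) * cexp j (\<lambda>h'. ennreal (relM m (Suc n) j h' * e (Suc n + j) h')) r')) r"
proof -
  let ?W = "\<lambda>r'. ennreal (relM m n 1 r') * cexp j (\<lambda>h'. ennreal (relM m (Suc n) j h' * e (Suc n + j) h')) r'"
  have W: "adapted (Suc (Suc n)) ?W"
    using relM_adapted[OF m, of n 1] adapted_cexp[OF weighted_payoff_adapted[OF m e, of "Suc n" j]]
    by (intro adapted_mult_ennreal adapted_ennreal) simp_all
  have "cexp (Suc j) (\<lambda>h'. ennreal (relM m n (Suc j) h' * e (n + Suc j) h')) r = step ?W r"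
    unfolding cexp_Suc
    by (rule step_cong[OF r]) (rule cexp_weighted_payoff_Suc[OF m e e_nonneg Hist_snoc[OF r]])
  moreover have "step (\<lambda>r'. ennreal (\<gamma> ^ j) * ?W r') r = ennreal (\<gamma> ^ j) * step ?W r"
    by (rule step_cmult[OF r W])
  ultimately show ?thesis
    using \<gamma> by (simp add: ennreal_mult power_Suc mult.assoc mult.left_commute)
qed

lemma dvalue_Bellman:
  assumes m: "m \<in> Dist Y P MX" and e: "\<And>k. adapted (Suc k) (e k)"
    and e_nonneg: "\<And>k h. h \<in> Hist (Suc k) \<Longrightarrow> 0 \<le> e k h" and \<gamma>: "0 \<le> \<gamma>" and r: "r \<in> Hist (Suc n)"
  shows "dvalue \<gamma> m e n r
    = ennreal (e n r) + ennreal \<gamma> * step (\<lambda>r'. ennreal (relM m n 1 r') * dvalue \<gamma> m e (Suc n) r') r"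
proof -
  define T where "T j = ennreal (\<gamma> ^ j) * cexp j (\<lambda>h'. ennreal (relM m n j h' * e (n + j) h')) r" for j
  define G where "G = (\<lambda>j r'. ennreal (relM m n 1 r')
    * (ennreal (\<gamma> ^ j) * cexp j (\<lambda>h'. ennreal (relM m (Suc n) j h' * e (Suc n + j) h')) r'))"
  have G: "adapted (Suc (Suc n)) (G j)" for j
    unfolding G_def using relM_adapted[OF m, of n 1]
      adapted_cexp[OF weighted_payoff_adapted[OF m e, of "Suc n" j]]
    by (intro adapted_mult_ennreal adapted_ennreal adapted_const) simp_all
  have "dvalue \<gamma> m e n r = (\<Sum>j. T (Suc j)) + T 0"
    unfolding dvalue_def T_def[symmetric] using suminf_offset[of T 1, OF summableI] by simp
  also have "(\<Sum>j. T (Suc j)) = ennreal \<gamma> * (\<Sum>j. step (G j) r)"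
    by (simp only: T_def G_def dvalue_term_Suc[OF m e e_nonneg \<gamma> r] ennreal_suminf_cmult)
  also have "(\<Sum>j. step (G j) r) = step (\<lambda>r'. \<Sum>j. G j r') r"
    by (rule step_suminf[OF r G, symmetric])
  also have "\<dots> = step (\<lambda>r'. ennreal (relM m n 1 r') * dvalue \<gamma> m e (Suc n) r') r"
    unfolding G_def dvalue_def by (simp only: ennreal_suminf_cmult)
  finally show ?thesis by (simp add: T_def cexp_0 add.commute)
qed

lemma dvalue_mono:
  assumes r: "r \<in> Hist (Suc n)"
    and le: "\<And>j h'. h' \<in> Hist (Suc n + j) \<Longrightarrow> take (Suc n) h' = r
      \<Longrightarrow> relM m1 n j h' * e1 (n + j) h' \<le> relM m2 n j h' * e2 (n + j) h'"
  shows "dvalue \<gamma> m1 e1 n r \<le> dvalue \<gamma> m2 e2 n r"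
  unfolding dvalue_def
  by (intro suminf_le[OF _ summableI summableI] mult_left_mono[OF cexp_mono[OF r]] ennreal_leI le) simp_all

lemma dvalue_eq_0:
  assumes r: "r \<in> Hist (Suc n)"
    and z: "\<And>j h'. h' \<in> Hist (Suc n + j) \<Longrightarrow> take (Suc n) h' = r \<Longrightarrow> relM m n j h' * e (n + j) h' \<le> 0"
  shows "dvalue \<gamma> m e n r = 0"
proof -
  have "cexp j (\<lambda>h'. ennreal (relM m n j h' * e (n + j) h')) r = cexp j (\<lambda>_. 0) r" for j
    by (rule cexp_cong[OF r]) (use z in \<open>auto simp: ennreal_eq_0_iff\<close>)
  then show ?thesis unfolding dvalue_def using cexp_const[OF r] by simp
qed

lemma dvalue_cmult:
  assumes m: "m \<in> Dist Y P MX" and e: "\<And>k. adapted (Suc k) (e k)"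
    and e_nonneg: "\<And>k h. h \<in> Hist (Suc k) \<Longrightarrow> 0 \<le> e k h" and a: "0 \<le> a" and r: "r \<in> Hist (Suc n)"
  shows "dvalue \<gamma> m (\<lambda>k h. a * e k h) n r = ennreal a * dvalue \<gamma> m e n r"
proof -
  have "cexp j (\<lambda>h'. ennreal (relM m n j h' * (a * e (n + j) h'))) r
      = cexp j (\<lambda>h'. ennreal a * ennreal (relM m n j h' * e (n + j) h')) r" for j
  proof (rule cexp_cong[OF r])
    fix h' assume h': "h' \<in> Hist (Suc n + j)"
    then have "0 \<le> relM m n j h' * e (n + j) h'"
      using relM_nonneg[OF m h'] e_nonneg[of h' "n + j"] by simp
    then show "ennreal (relM m n j h' * (a * e (n + j) h')) = ennreal a * ennreal (relM m n j h' * e (n + j) h')"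
      using a by (simp add: ennreal_mult[symmetric] mult.left_commute)
  qed
  also have "\<dots> j = ennreal a * cexp j (\<lambda>h'. ennreal (relM m n j h' * e (n + j) h')) r" for j
    by (rule cexp_cmult[OF r]) (use weighted_payoff_adapted[OF m e, of n j] in simp_all)
  finally show ?thesis unfolding dvalue_def by (simp add: mult.left_commute ennreal_suminf_cmult)
qed

lemma dvalue_le_geometric:
  assumes m: "m \<in> Dist Y P MX" and B: "0 \<le> B" and \<gamma>: "0 \<le> \<gamma>" "\<gamma> < 1" and r: "r \<in> Hist (Suc n)"
    and e_le: "\<And>k h. h \<in> Hist (Suc k) \<Longrightarrow> e k h \<le> B"
  shows "dvalue \<gamma> m e n r \<le> ennreal (B / (1 - \<gamma>))"
proof -
  have "dvalue \<gamma> m e n r \<le> dvalue \<gamma> m (\<lambda>k h. B * 1) n r"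
  proof (rule dvalue_mono[OF r])
    fix j h' assume "h' \<in> Hist (Suc n + j)"
    then show "relM m n j h' * e (n + j) h' \<le> relM m n j h' * (B * 1)"
      using mult_left_mono[OF e_le[of h' "n + j"] relM_nonneg[OF m]] by simp
  qed
  also have "\<dots> = ennreal B * dvalue \<gamma> m (\<lambda>k h. 1) n r"
    by (rule dvalue_cmult[OF m _ _ B r]) (simp_all add: adapted_const)
  also have "dvalue \<gamma> m (\<lambda>k h. 1) n r = (\<Sum>j. ennreal (\<gamma> ^ j))"
    unfolding dvalue_def mult_1_right cexp_relM[OF m r] by simp
  also have "ennreal B * (\<Sum>j. ennreal (\<gamma> ^ j)) = (\<Sum>j. ennreal (\<gamma> ^ j * B))"
    unfolding ennreal_suminf_cmult[symmetric] using B \<gamma> by (simp add: ennreal_mult' mult.commute)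
  also have "\<dots> = ennreal (B / (1 - \<gamma>))"
  proof -
    have "(\<lambda>j. \<gamma> ^ j * B) sums (B / (1 - \<gamma>))"
      using sums_mult2[OF geometric_sums[of \<gamma>], of B] \<gamma> by (simp add: field_simps)
    then show ?thesis using B \<gamma> by (subst suminf_ennreal2) (auto simp: sums_iff)
  qed
  finally show ?thesis .
qed

lemma dvalue_truncate:
  "dvalue \<gamma> m (\<lambda>k x. if k < n + N then e k x else 0) n r
    = (\<Sum>j<N. ennreal (\<gamma> ^ j) * cexp j (\<lambda>h'. ennreal (relM m n j h' * e (n + j) h')) r)"
proof -
  have "dvalue \<gamma> m (\<lambda>k x. if k < n + N then e k x else 0) n r
      = (\<Sum>j. if j < N then ennreal (\<gamma> ^ j) * cexp j (\<lambda>h'. ennreal (relM m n j h' * e (n + j) h')) r else 0)"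
    unfolding dvalue_def by (intro suminf_cong) (auto simp: cexp_zero)
  also have "\<dots> = (\<Sum>j<N. ennreal (\<gamma> ^ j) * cexp j (\<lambda>h'. ennreal (relM m n j h' * e (n + j) h')) r)"
    by (subst suminf_finite[of "{..<N}"]) auto
  finally show ?thesis .
qed

lemma dvalue_eq_SUP_truncate:
  "dvalue \<gamma> m e n r = (SUP N. dvalue \<gamma> m (\<lambda>k x. if k < n + N then e k x else 0) n r)"
  unfolding dvalue_truncate unfolding dvalue_def by (rule suminf_eq_SUP)

lemma DS_Ent_eq_dvalue:
  assumes m: "m \<in> Dist Y P MX" and r: "r \<in> Hist (Suc n)" and \<gamma>: "0 \<le> \<gamma>"
  shows "DS Y P MX \<gamma> (\<lambda>j h'. relM m n j h' * Ent Y P (m (Suc (n + j)) h') (snd (last h'))) r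
       = enn2ereal (dvalue \<gamma> m (\<lambda>k h. Ent Y P (m (Suc k) h) (snd (last h))) n r)"
proof -
  have "ereal (\<gamma> ^ j) * cE Y P MX j (\<lambda>h'. relM m n j h' * Ent Y P (m (Suc (n + j)) h') (snd (last h'))) r
     = enn2ereal (ennreal (\<gamma> ^ j)
        * cexp j (\<lambda>h'. ennreal (relM m n j h' * Ent Y P (m (Suc (n + j)) h') (snd (last h')))) r)" for j
  proof -
    have "cexp j (\<lambda>h'. ennreal (- (relM m n j h' * Ent Y P (m (Suc (n + j)) h') (snd (last h'))))) r
        = cexp j (\<lambda>_. 0) r"
    proof (rule cexp_cong[OF r])
      fix h' assume h': "h' \<in> Hist (Suc n + j)"
      then have "0 \<le> relM m n j h' * Ent Y P (m (Suc (n + j)) h') (snd (last h'))"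
        using relM_nonneg[OF m h'] Ent_Dist_nonneg[OF m, of h' "n + j"] by simp
      then show "ennreal (- (relM m n j h' * Ent Y P (m (Suc (n + j)) h') (snd (last h')))) = 0"
        by (simp add: ennreal_eq_0_iff)
    qed
    then show ?thesis
      unfolding cE_def using \<gamma> by (simp add: cexp_zero times_ennreal.rep_eq zero_ennreal.rep_eq)
  qed
  then show ?thesis unfolding DS_def dvalue_def suminf_enn2ereal by simp
qed

lemma enn2ereal_minus_shift:
  fixes A B G :: ennreal
  assumes "A + ennreal C = G + B" "B \<le> ennreal C" "0 \<le> C"
  shows "enn2ereal A - enn2ereal B = enn2ereal G - ereal C"
proof -
  have "enn2ereal A + ereal C = enn2ereal G + enn2ereal B" "enn2ereal B \<le> ereal C"
    using arg_cong[OF assms(1), of enn2ereal] assms(2,3)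
    by (simp_all add: plus_ennreal.rep_eq less_eq_ennreal.rep_eq)
  then show ?thesis
    by (cases "enn2ereal A"; cases "enn2ereal B"; cases "enn2ereal G") auto
qed

text \<open>The positive and negative parts in \<open>cE\<close> are handled by shifting the integrand by the
  nonnegative martingale \<open>C \<cdot> M\<^sub>t\<^sub>+\<^sub>j / M\<^sub>t\<close>, whose conditional expectation is the constant \<open>C\<close>.\<close>
lemma cE_eq_shifted:
  assumes m: "m \<in> Dist Y P MX" and r: "r \<in> Hist (Suc n)" and C: "0 \<le> C"
    and F: "adapted (Suc n + j) F" and W: "adapted (Suc n + j) W"
    and FW: "\<And>h'. h' \<in> Hist (Suc n + j) \<Longrightarrow> W h' = F h' + C * relM m n j h' \<and> 0 \<le> W h'"
  shows "cE Y P MX j F r = enn2ereal (cexp j (\<lambda>h'. ennreal (W h')) r) - ereal C"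
proof -
  have R: "adapted (Suc n + j) (\<lambda>h'. C * relM m n j h')"
    by (intro adapted_mult adapted_const relM_adapted[OF m])
  have shift: "cexp j (\<lambda>h'. ennreal (C * relM m n j h')) r = ennreal C"
  proof -
    have "cexp j (\<lambda>h'. ennreal (C * relM m n j h')) r = cexp j (\<lambda>h'. ennreal C * ennreal (relM m n j h')) r"
      by (rule cexp_cong[OF r]) (use relM_nonneg[OF m] C in \<open>simp add: ennreal_mult\<close>)
    also have "\<dots> = ennreal C"
      using cexp_cmult[OF r _ adapted_ennreal[OF relM_adapted[OF m]]] cexp_relM[OF m r] by simp
    finally show ?thesis .
  qed
  have "cexp j (\<lambda>h'. ennreal (F h') + ennreal (C * relM m n j h')) r
      = cexp j (\<lambda>h'. ennreal (W h') + ennreal (- F h')) r"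
  proof (rule cexp_cong[OF r])
    fix h' assume "h' \<in> Hist (Suc n + j)"
    from FW[OF this] relM_nonneg[OF m this] C
    show "ennreal (F h') + ennreal (C * relM m n j h') = ennreal (W h') + ennreal (- F h')"
      by (cases "0 \<le> F h'") (auto simp: ennreal_plus[symmetric] ennreal_neg simp del: ennreal_plus)
  qed
  then have "cexp j (\<lambda>h'. ennreal (F h')) r + ennreal C
      = cexp j (\<lambda>h'. ennreal (W h')) r + cexp j (\<lambda>h'. ennreal (- F h')) r"
    using F W R unfolding shift[symmetric]
    by (simp add: cexp_add[OF r] adapted_ennreal adapted_uminus)
  moreover have "cexp j (\<lambda>h'. ennreal (- F h')) r \<le> ennreal C"
    unfolding shift[symmetric]
    by (rule cexp_mono[OF r], rule ennreal_leI) (use FW in force)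
  ultimately show ?thesis
    unfolding cE_def by (rule enn2ereal_minus_shift[OF _ _ C])
qed

lemma sums_enn2ereal_minus:
  fixes a :: "nat \<Rightarrow> ennreal" and b :: "nat \<Rightarrow> real"
  assumes b: "b sums B"
  shows "(\<lambda>j. enn2ereal (a j) - ereal (b j)) sums (enn2ereal (suminf a) - ereal B)"
proof -
  have partial: "(\<Sum>i<k. enn2ereal (a i) - ereal (b i)) = enn2ereal (\<Sum>i<k. a i) - ereal (\<Sum>i<k. b i)" for k
  proof (induction k)
    case (Suc k)
    have "(X - ereal p) + (x - ereal q) = (X + x) - ereal (p + q)" if "0 \<le> X" "0 \<le> x" for X x :: ereal and p q
      using that by (cases X; cases x) auto
    then show ?case using Suc by (simp add: plus_ennreal.rep_eq)
  qed (simp add: zero_ennreal.rep_eq)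
  have "(\<lambda>k. enn2ereal (\<Sum>i<k. a i)) \<longlonglongrightarrow> enn2ereal (suminf a)"
    using summable_sums[OF summableI, of a] unfolding sums_def by (intro tendsto_intros)
  moreover have "(\<lambda>k. ereal (\<Sum>i<k. b i)) \<longlonglongrightarrow> ereal B"
    using b unfolding sums_def by (intro tendsto_intros)
  ultimately show ?thesis unfolding sums_def partial
    by (rule tendsto_diff_ereal_general) simp
qed

lemma cE_weighted_eq_shifted:
  assumes m: "m \<in> Dist Y P MX" and r: "r \<in> Hist (Suc n)" and C: "0 \<le> C"
    and f: "adapted (Suc n + j) f" and f_ge: "\<And>h'. h' \<in> Hist (Suc n + j) \<Longrightarrow> - C \<le> f h'"
  shows "cE Y P MX j (\<lambda>h'. relM m n j h' * f h') r
    = enn2ereal (cexp j (\<lambda>h'. ennreal (relM m n j h' * (f h' + C))) r) - ereal C"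
proof (rule cE_eq_shifted[OF m r C])
  show "adapted (Suc n + j) (\<lambda>h'. relM m n j h' * f h')"
    by (intro adapted_mult relM_adapted[OF m] f)
  show "adapted (Suc n + j) (\<lambda>h'. relM m n j h' * (f h' + C))"
    by (intro adapted_mult adapted_add relM_adapted[OF m] f adapted_const)
  fix h' assume h': "h' \<in> Hist (Suc n + j)"
  have "0 \<le> relM m n j h' * (f h' + C)"
    using relM_nonneg[OF m h'] f_ge[OF h'] by simp
  then show "relM m n j h' * (f h' + C) = relM m n j h' * f h' + C * relM m n j h'
      \<and> 0 \<le> relM m n j h' * (f h' + C)"
    by (simp add: algebra_simps)
qed

lemma SPMA_eq_dvalue:
  assumes m: "m \<in> Dist Y P MX" and r: "r \<in> Hist (Suc n)"
    and \<gamma>: "0 \<le> \<gamma>" "\<gamma> < 1" and \<theta>: "0 \<le> \<theta>" and C: "0 \<le> C"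
    and c: "\<And>k. adapted (Suc k) (c k)" and c_bound: "\<And>k h. h \<in> Hist (Suc k) \<Longrightarrow> \<bar>c k h\<bar> \<le> C"
  shows "SPMA Y P MX \<gamma> \<theta> c n m r = enn2ereal (dvalue \<gamma> m
      (\<lambda>k h. c k h + C + \<theta> * \<gamma> * Ent Y P (m (Suc k) h) (snd (last h))) n r) - ereal (C / (1 - \<gamma>))"
proof -
  define f where "f k h = c k h + \<theta> * \<gamma> * Ent Y P (m (Suc k) h) (snd (last h))" for k h
  have "ereal (\<gamma> ^ j) * cE Y P MX j (\<lambda>h'. relM m n j h' * f (n + j) h') r
     = enn2ereal (ennreal (\<gamma> ^ j) * cexp j (\<lambda>h'. ennreal (relM m n j h' * (f (n + j) h' + C))) r)
       - ereal (\<gamma> ^ j * C)" for j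
  proof -
    have "- C \<le> f (n + j) h'" if "h' \<in> Hist (Suc n + j)" for h'
    proof -
      have "0 \<le> \<theta> * \<gamma> * Ent Y P (m (Suc (n + j)) h') (snd (last h'))"
        using that Ent_Dist_nonneg[OF m, of h' "n + j"] \<theta> \<gamma> by simp
      then show ?thesis unfolding f_def using that c_bound[of h' "n + j"] by (simp add: abs_le_iff)
    qed
    moreover have "adapted (Suc n + j) (f (n + j))"
      unfolding f_def using c[of "n + j"] Ent_adapted[OF m, of "n + j"]
      by (intro adapted_add adapted_mult adapted_const) simp_all
    moreover have "ereal q * (x - ereal C) = ereal q * x - ereal (q * C)" if "0 \<le> q" for q x
      using that by (cases x) (auto simp: algebra_simps)
    ultimately show ?thesis
      using cE_weighted_eq_shifted[OF m r C] \<gamma> by (simp add: times_ennreal.rep_eq)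
  qed
  moreover have "(\<lambda>j. \<gamma> ^ j * C) sums (C / (1 - \<gamma>))"
    using sums_mult2[OF geometric_sums[of \<gamma>], of C] \<gamma> by (simp add: field_simps)
  note sums_enn2ereal_minus[OF this]
  ultimately show ?thesis
    unfolding SPMA_def DS_def dvalue_def f_def by (simp add: sums_iff algebra_simps)
qed

end

lemma ennreal_le_divide:
  assumes "0 < a" "0 \<le> b" "ennreal a * x \<le> ennreal b"
  shows "x \<le> ennreal (b / a)"
proof (cases x)
  case (real r)
  then have "a * r \<le> b" using assms by (simp add: ennreal_mult[symmetric] ennreal_le_iff)
  then show ?thesis using real assms by (simp add: field_simps ennreal_leI)
qed (use assms in \<open>simp add: ennreal_mult_top top_unique\<close>)

lemma INF_eq_if_minimiser_in_subset:
  assumes "A \<subseteq> B" "a \<in> A" "\<And>b. b \<in> B \<Longrightarrow> f a \<le> f b"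
  shows "(INF x\<in>A. f x) = (INF x\<in>B. (f x :: 'b :: complete_lattice))"
  by (rule antisym[OF INF_lower2[OF assms(2)] INF_superset_mono[OF assms(1) order.refl]])
     (use assms(3) in \<open>blast intro: INF_greatest\<close>)

locale stopped_minimiser = markov_histories Y P MX for Y P and MX :: "'x measure" +
  fixes \<gamma> \<theta> C :: real and c :: "nat \<Rightarrow> ('x \<times> real) list \<Rightarrow> real" and t :: nat
    and h :: "('x \<times> real) list" and mopt :: "nat \<Rightarrow> ('x \<times> real) list \<Rightarrow> real \<Rightarrow> real"
  assumes \<gamma>_pos: "0 < \<gamma>" and \<gamma>_less_1: "\<gamma> < 1" and \<theta>_pos: "0 < \<theta>" and C_nonneg: "0 \<le> C"
    and c_adapted: "\<And>k. adapted (Suc k) (c k)"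
    and c_bound: "\<And>k x. x \<in> Hist (Suc k) \<Longrightarrow> \<bar>c k x\<bar> \<le> C"
    and mopt: "mopt \<in> Dist Y P MX" and h: "h \<in> Hist (Suc t)"
    and mopt_minimal: "\<And>m. m \<in> Dist Y P MX \<Longrightarrow> SPMA Y P MX \<gamma> \<theta> c t mopt h \<le> SPMA Y P MX \<gamma> \<theta> c t m h"
begin

definition "cost m k x = c k x + C + \<theta> * \<gamma> * Ent Y P (m (Suc k) x) (snd (last x))"
definition "ent m k x = Ent Y P (m (Suc k) x) (snd (last x))"
definition "K = 2 * C / ((1 - \<gamma>) * \<theta> * \<gamma>)"
definition "ent_value n r = dvalue \<gamma> mopt (ent mopt) n r"

definition "stopped x \<longleftrightarrow> (\<exists>i. Suc t \<le> i \<and> i \<le> length x \<and> ennreal K < ent_value (i - 1) (take i x))"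
definition "mstop \<tau> x y = (if \<tau> \<le> t \<or> stopped x then 1 else mopt \<tau> x y)"

lemma \<gamma>_nonneg: "0 \<le> \<gamma>"
  using \<gamma>_pos by simp

lemma \<theta>\<gamma>_nonneg: "0 \<le> \<theta> * \<gamma>"
  using \<theta>_pos \<gamma>_pos by simp

lemma K_nonneg: "0 \<le> K"
  unfolding K_def using \<theta>_pos \<gamma>_pos \<gamma>_less_1 C_nonneg by simp

lemma \<theta>\<gamma>K_eq: "\<theta> * \<gamma> * K = 2 * C / (1 - \<gamma>)"
  unfolding K_def using \<theta>_pos \<gamma>_pos \<gamma>_less_1 by (simp add: field_simps)

lemma cost_adapted: "m \<in> Dist Y P MX \<Longrightarrow> adapted (Suc k) (cost m k)"
  unfolding cost_def[abs_def] by (intro adapted_add adapted_mult adapted_const c_adapted Ent_adapted)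

lemma ent_adapted: "m \<in> Dist Y P MX \<Longrightarrow> adapted (Suc k) (ent m k)"
  unfolding ent_def[abs_def] by (rule Ent_adapted)

lemma ent_nonneg: "m \<in> Dist Y P MX \<Longrightarrow> x \<in> Hist (Suc k) \<Longrightarrow> 0 \<le> ent m k x"
  unfolding ent_def by (rule Ent_Dist_nonneg)

lemma ent_le_cost: "x \<in> Hist (Suc k) \<Longrightarrow> \<theta> * \<gamma> * ent m k x \<le> cost m k x"
  unfolding cost_def ent_def using c_bound[of x k] by (simp add: abs_le_iff)

lemma cost_nonneg: "m \<in> Dist Y P MX \<Longrightarrow> x \<in> Hist (Suc k) \<Longrightarrow> 0 \<le> cost m k x"
  using ent_le_cost[of x k m] ent_nonneg[of m x k] \<theta>_pos \<gamma>_pos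
  by (smt (verit) mult_nonneg_nonneg)

lemma cost_one_le: "x \<in> Hist (Suc k) \<Longrightarrow> cost (\<lambda>_ _ _. 1) k x \<le> 2 * C"
  unfolding cost_def using c_bound[of x k] by (simp add: abs_le_iff)

lemma SPMA_eq_dvalue_cost:
  "m \<in> Dist Y P MX \<Longrightarrow> r \<in> Hist (Suc n)
    \<Longrightarrow> SPMA Y P MX \<gamma> \<theta> c n m r = enn2ereal (dvalue \<gamma> m (cost m) n r) - ereal (C / (1 - \<gamma>))"
  unfolding cost_def[abs_def]
  by (rule SPMA_eq_dvalue) (use \<gamma>_pos \<gamma>_less_1 \<theta>_pos C_nonneg c_adapted c_bound in auto)

lemma dvalue_ent_le_cost:
  assumes m: "m \<in> Dist Y P MX" and r: "r \<in> Hist (Suc n)"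
  shows "ennreal (\<theta> * \<gamma>) * dvalue \<gamma> m (ent m) n r \<le> dvalue \<gamma> m (cost m) n r"
proof -
  have "ennreal (\<theta> * \<gamma>) * dvalue \<gamma> m (ent m) n r = dvalue \<gamma> m (\<lambda>k x. (\<theta> * \<gamma>) * ent m k x) n r"
    using dvalue_cmult[OF m ent_adapted[OF m] ent_nonneg[OF m] \<theta>\<gamma>_nonneg r] by simp
  also have "\<dots> \<le> dvalue \<gamma> m (cost m) n r"
    by (rule dvalue_mono[OF r]) (use ent_le_cost relM_nonneg[OF m] in \<open>simp add: mult_left_mono\<close>)
  finally show ?thesis .
qed

lemma dvalue_cost_le:
  assumes m: "m \<in> Dist Y P MX" and r: "r \<in> Hist (Suc n)"
    and le: "\<And>k x. x \<in> Hist (Suc k) \<Longrightarrow> e k x \<le> 2 * C"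
  shows "dvalue \<gamma> m e n r \<le> ennreal (\<theta> * \<gamma>) * ennreal K"
  using dvalue_le_geometric[OF m _ \<gamma>_nonneg \<gamma>_less_1 r le] C_nonneg \<theta>\<gamma>K_eq \<theta>_pos \<gamma>_pos K_nonneg
  by (simp add: ennreal_mult'[symmetric])

text \<open>Minimality of \<open>m\<^sup>*\<close> against \<open>m = 1\<close> bounds its entropy at the start node.\<close>
lemma ent_value_start_le: "ent_value t h \<le> ennreal K"
proof -
  have "enn2ereal (dvalue \<gamma> mopt (cost mopt) t h) - ereal (C / (1 - \<gamma>))
      \<le> enn2ereal (dvalue \<gamma> (\<lambda>_ _ _. 1) (cost (\<lambda>_ _ _. 1)) t h) - ereal (C / (1 - \<gamma>))"
    using mopt_minimal[OF one_in_Dist] SPMA_eq_dvalue_cost[OF mopt h] SPMA_eq_dvalue_cost[OF one_in_Dist h]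
    by simp
  then have "dvalue \<gamma> mopt (cost mopt) t h \<le> dvalue \<gamma> (\<lambda>_ _ _. 1) (cost (\<lambda>_ _ _. 1)) t h"
    unfolding less_eq_ennreal.rep_eq
    by (cases "enn2ereal (dvalue \<gamma> mopt (cost mopt) t h)";
        cases "enn2ereal (dvalue \<gamma> (\<lambda>_ _ _. 1) (cost (\<lambda>_ _ _. 1)) t h)") auto
  also have "\<dots> \<le> ennreal (\<theta> * \<gamma>) * ennreal K"
    by (rule dvalue_cost_le[OF one_in_Dist h cost_one_le])
  finally have "ennreal (\<theta> * \<gamma>) * ent_value t h \<le> ennreal (\<theta> * \<gamma> * K)"
    unfolding ent_value_def using dvalue_ent_le_cost[OF mopt h] \<theta>_pos \<gamma>_pos K_nonneg
    by (simp add: ennreal_mult')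
  from ennreal_le_divide[OF _ _ this] show ?thesis
    using \<theta>_pos \<gamma>_pos K_nonneg by simp
qed

lemma ent_value_adapted: "adapted (Suc n) (ent_value n)"
  unfolding ent_value_def[abs_def] dvalue_def
  by (intro adapted_suminf_ennreal adapted_mult_ennreal adapted_const adapted_cexp)
     (use weighted_payoff_adapted[OF mopt ent_adapted[OF mopt]] in simp_all)

lemma stopped_extend:
  assumes "stopped x" "length x \<le> length x'" "take (length x) x' = x"
  shows "stopped x'"
proof -
  obtain i where i: "Suc t \<le> i" "i \<le> length x" "ennreal K < ent_value (i - 1) (take i x)"
    using assms(1) unfolding stopped_def by blast
  have "take i x' = take i x" using assms(3) i(2) by (metis min.absorb1 take_take)
  then show ?thesis unfolding stopped_def using i assms(2) by (intro exI[of _ i]) auto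
qed

lemma stopped_take: "stopped (take k x) \<Longrightarrow> stopped x"
  using stopped_extend[of "take k x" x] by (cases "k \<le> length x") (auto simp: min_def)

lemma not_stopped_imp_ent_value_le:
  assumes "t \<le> n" "x \<in> Hist (Suc n)" "\<not> stopped x"
  shows "ent_value n x \<le> ennreal K"
proof -
  have "length x = Suc n" using assms(2) by (simp add: Hist_iff)
  then show ?thesis using assms(1,3) unfolding stopped_def
    by (metis diff_Suc_1 not_le_imp_less not_less_eq_eq order.refl take_all)
qed

lemma stopped_snoc_ent_value:
  assumes x: "x \<in> Hist (Suc n)" and not_stopped: "\<not> stopped x" and "stopped (x @ [z])"
  shows "ennreal K < ent_value (Suc n) (x @ [z])"
proof -
  have len: "length x = Suc n" using x by (simp add: Hist_iff)
  obtain i where i: "Suc t \<le> i" "i \<le> length (x @ [z])" "ennreal K < ent_value (i - 1) (take i (x @ [z]))"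
    using assms(3) unfolding stopped_def by blast
  show ?thesis
  proof (cases "i \<le> Suc n")
    case True
    then have "take i (x @ [z]) = take i x" using len by simp
    then have "stopped x" unfolding stopped_def using i True len by (intro exI[of _ i]) auto
    then show ?thesis using not_stopped by simp
  next
    case False
    then have "i = Suc (Suc n)" using i(2) len by simp
    then show ?thesis using i(3) len by simp
  qed
qed

lemma not_stopped_start: "\<not> stopped h"
proof
  assume "stopped h"
  then obtain i where i: "Suc t \<le> i" "i \<le> length h" "ennreal K < ent_value (i - 1) (take i h)"
    unfolding stopped_def by blast
  moreover have "length h = Suc t" using h by (simp add: Hist_iff)
  ultimately have "i = Suc t" "take i h = h" by auto
  then show False using i(3) ent_value_start_le by simp
qed

lemma stopped_set_measurable:
  "{w \<in> space (path_space (Suc k)). stopped (map w [0..<Suc k])} \<in> sets (path_space (Suc k))"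
proof -
  have "(\<lambda>w. ent_value (i - 1) (take i (map w [0..<Suc k]))) \<in> borel_measurable (path_space (Suc k))"
    if "i \<in> {Suc t..Suc k}" for i
    using adapted_take[of i "Suc k" "ent_value (i - 1)"] ent_value_adapted[of "i - 1"] that
    by (cases i) (auto simp: adapted_def)
  then have "(\<Union>i\<in>{Suc t..Suc k}. {w \<in> space (path_space (Suc k)).
      ennreal K < ent_value (i - 1) (take i (map w [0..<Suc k]))}) \<in> sets (path_space (Suc k))"
    by (intro sets.finite_UN) measurable
  moreover have "{w \<in> space (path_space (Suc k)). stopped (map w [0..<Suc k])}
      = (\<Union>i\<in>{Suc t..Suc k}. {w \<in> space (path_space (Suc k)).
          ennreal K < ent_value (i - 1) (take i (map w [0..<Suc k]))})"
    unfolding stopped_def by auto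
  ultimately show ?thesis by simp
qed

lemma mstop_in_Dist: "mstop \<in> Dist Y P MX"
  unfolding Dist_def
proof safe
  fix k x assume "x \<in> Hist (Suc k)"
  then show "inM Y P (mstop (Suc k) x)"
    using mopt P_sum unfolding mstop_def by (cases "Suc k \<le> t \<or> stopped x") (auto simp: Dist_def inM_def)
next
  fix k y assume y: "y \<in> Y"
  have "(\<lambda>w. if stopped (map w [0..<Suc k]) then 1 else mopt (Suc k) (map w [0..<Suc k]) y)
      \<in> borel_measurable (path_space (Suc k))"
    by (rule measurable_If[OF _ _ stopped_set_measurable])
       (use Dist_adapted[OF mopt _ y, of "Suc k"] in \<open>simp_all add: adapted_def\<close>)
  then show "hist_measurable Y MX (Suc k) (\<lambda>x. mstop (Suc k) x y)"
    unfolding hist_measurable_iff_adapted mstop_def adapted_def by (cases "Suc k \<le> t") simp_all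
qed

lemma mstop_eq: "t < k \<Longrightarrow> \<not> stopped x \<Longrightarrow> mstop k x = mopt k x"
  unfolding mstop_def by auto

lemma mstop_stopped: "stopped x \<Longrightarrow> mstop k x = (\<lambda>_. 1)"
  unfolding mstop_def by auto

lemma relM_mstop_1: "x \<in> Hist (Suc n) \<Longrightarrow> t \<le> n \<Longrightarrow> \<not> stopped x
    \<Longrightarrow> relM mstop n 1 (x @ [z]) = relM mopt n 1 (x @ [z])"
  unfolding relM_1 mstop_def by (simp add: Hist_iff nth_append)

lemma cost_mstop_stopped_le: "z \<in> Hist (Suc k) \<Longrightarrow> stopped z \<Longrightarrow> cost mstop k z \<le> 2 * C"
  unfolding cost_def mstop_def using c_bound[of z k] by (simp add: abs_le_iff)

text \<open>At a stopping node, switching to \<open>m = 1\<close> costs at most \<open>\<theta>\<gamma>K\<close>, less than the entropy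
  part of the cost of continuing with \<open>m\<^sup>*\<close>.\<close>
lemma dvalue_mstop_le_at_stop:
  assumes r: "r \<in> Hist (Suc n)" and "stopped r" "ennreal K < ent_value n r"
    and e_le: "\<And>j z. z \<in> Hist (Suc n + j) \<Longrightarrow> stopped z \<Longrightarrow> e (n + j) z \<le> 2 * C"
  shows "dvalue \<gamma> mstop e n r \<le> dvalue \<gamma> mopt (cost mopt) n r"
proof -
  have "dvalue \<gamma> mstop e n r \<le> dvalue \<gamma> mstop (\<lambda>_ _. 2 * C) n r"
  proof (rule dvalue_mono[OF r])
    fix j z assume z: "z \<in> Hist (Suc n + j)" "take (Suc n) z = r"
    then have "stopped z" using stopped_extend[OF \<open>stopped r\<close>] r by (auto simp: Hist_iff)
    then show "relM mstop n j z * e (n + j) z \<le> relM mstop n j z * (2 * C)"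
      using relM_nonneg[OF mstop_in_Dist z(1)] e_le[OF z(1)] by (simp add: mult_left_mono)
  qed
  also have "\<dots> \<le> ennreal (\<theta> * \<gamma>) * ennreal K"
    by (rule dvalue_cost_le[OF mstop_in_Dist r]) simp
  also have "\<dots> \<le> ennreal (\<theta> * \<gamma>) * ent_value n r"
    using assms(3) by (intro mult_left_mono) auto
  also have "\<dots> \<le> dvalue \<gamma> mopt (cost mopt) n r"
    unfolding ent_value_def by (rule dvalue_ent_le_cost[OF mopt r])
  finally show ?thesis .
qed

lemma dvalue_truncated_cost_mstop_le:
  assumes "t \<le> n" "x \<in> Hist (Suc n)" "\<not> stopped x"
  shows "dvalue \<gamma> mstop (\<lambda>k z. if k < n + N then cost mstop k z else 0) n x \<le> dvalue \<gamma> mopt (cost mopt) n x"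
  using assms
proof (induction N arbitrary: n x)
  case 0
  then show ?case using dvalue_eq_0[of x n mstop "\<lambda>k z. if k < n + 0 then cost mstop k z else 0"] by simp
next
  case (Suc N)
  note x = Suc.prems(2)
  let ?e = "\<lambda>k z. if k < Suc n + N then cost mstop k z else 0"
  have e: "adapted (Suc k) (?e k)" for k
    using cost_adapted[OF mstop_in_Dist, of k] by (cases "k < Suc n + N") (simp_all add: adapted_const)
  have step_le: "step (\<lambda>r. ennreal (relM mstop n 1 r) * dvalue \<gamma> mstop ?e (Suc n) r) x
      \<le> step (\<lambda>r. ennreal (relM mopt n 1 r) * dvalue \<gamma> mopt (cost mopt) (Suc n) r) x"
  proof (rule step_mono[OF x])
    fix a y assume "a \<in> space MX" "y \<in> Y"
    then have r: "x @ [(a, y)] \<in> Hist (Suc (Suc n))" using Hist_snoc[OF x] by blast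
    have "dvalue \<gamma> mstop ?e (Suc n) (x @ [(a, y)]) \<le> dvalue \<gamma> mopt (cost mopt) (Suc n) (x @ [(a, y)])"
    proof (cases "stopped (x @ [(a, y)])")
      case True
      show ?thesis
        by (rule dvalue_mstop_le_at_stop[OF r True stopped_snoc_ent_value[OF x Suc.prems(3) True]])
           (use cost_mstop_stopped_le C_nonneg in auto)
    qed (use Suc.IH[of "Suc n"] r Suc.prems(1) in simp)
    then show "ennreal (relM mstop n 1 (x @ [(a, y)])) * dvalue \<gamma> mstop ?e (Suc n) (x @ [(a, y)])
        \<le> ennreal (relM mopt n 1 (x @ [(a, y)])) * dvalue \<gamma> mopt (cost mopt) (Suc n) (x @ [(a, y)])"
      using relM_mstop_1[OF x Suc.prems(1,3)] by (simp add: mult_left_mono)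
  qed
  have "cost mstop n x = cost mopt n x"
    unfolding cost_def using mstop_eq Suc.prems(1,3) by simp
  then have "dvalue \<gamma> mstop ?e n x = ennreal (cost mopt n x)
      + ennreal \<gamma> * step (\<lambda>r. ennreal (relM mstop n 1 r) * dvalue \<gamma> mstop ?e (Suc n) r) x"
    using dvalue_Bellman[OF mstop_in_Dist e _ \<gamma>_nonneg x] cost_nonneg[OF mstop_in_Dist] by simp
  also have "\<dots> \<le> ennreal (cost mopt n x)
      + ennreal \<gamma> * step (\<lambda>r. ennreal (relM mopt n 1 r) * dvalue \<gamma> mopt (cost mopt) (Suc n) r) x"
    by (intro add_left_mono mult_left_mono step_le) simp
  also have "\<dots> = dvalue \<gamma> mopt (cost mopt) n x"
    by (rule dvalue_Bellman[OF mopt cost_adapted[OF mopt] cost_nonneg[OF mopt] \<gamma>_nonneg x, symmetric])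
  finally show ?case by (simp add: add_Suc_right)
qed

lemma SPMA_mstop_le: "SPMA Y P MX \<gamma> \<theta> c t mstop h \<le> SPMA Y P MX \<gamma> \<theta> c t mopt h"
proof -
  have "dvalue \<gamma> mstop (cost mstop) t h \<le> dvalue \<gamma> mopt (cost mopt) t h"
    unfolding dvalue_eq_SUP_truncate[of \<gamma> mstop "cost mstop" t h]
    by (rule SUP_least) (rule dvalue_truncated_cost_mstop_le[OF order.refl h not_stopped_start])
  then show ?thesis
    unfolding SPMA_eq_dvalue_cost[OF mstop_in_Dist h] SPMA_eq_dvalue_cost[OF mopt h]
    by (intro ereal_minus_mono) (simp_all add: less_eq_ennreal.rep_eq)
qed

lemma weighted_ent_mstop_le:
  assumes "t \<le> n" and h': "h' \<in> Hist (Suc n + j)"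
  shows "relM mstop n j h' * ent mstop (n + j) h' \<le> relM mopt n j h' * ent mopt (n + j) h'"
proof (cases "stopped h'")
  case True
  then show ?thesis
    using relM_nonneg[OF mopt h'] ent_nonneg[OF mopt, of h' "n + j"] h' by (simp add: ent_def mstop_stopped)
next
  case False
  have "relM mstop n j h' = relM mopt n j h'"
    unfolding relM_def
  proof (rule prod.cong[OF refl])
    fix \<tau> assume "\<tau> \<in> {Suc n..n + j}"
    then show "mstop \<tau> (take \<tau> h') (snd (h' ! \<tau>)) = mopt \<tau> (take \<tau> h') (snd (h' ! \<tau>))"
      using mstop_eq[of \<tau> "take \<tau> h'"] stopped_take[of \<tau> h'] False assms(1) by force
  qed
  moreover have "ent mstop (n + j) h' = ent mopt (n + j) h'"
    unfolding ent_def using mstop_eq[of "Suc (n + j)" h'] False assms(1) by simp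
  ultimately show ?thesis by simp
qed

lemma dvalue_ent_mstop_le_from_start:
  assumes "t \<le> n" "x \<in> Hist (Suc n)"
  shows "dvalue \<gamma> mstop (ent mstop) n x \<le> ennreal K"
proof (cases "stopped x")
  case True
  have "dvalue \<gamma> mstop (ent mstop) n x = 0"
  proof (rule dvalue_eq_0[OF assms(2)])
    fix j h' assume "h' \<in> Hist (Suc n + j)" "take (Suc n) h' = x"
    then have "stopped h'" using stopped_extend[OF True] assms(2) by (auto simp: Hist_iff)
    then show "relM mstop n j h' * ent mstop (n + j) h' \<le> 0" by (simp add: ent_def mstop_stopped)
  qed
  then show ?thesis by simp
next
  case False
  have "dvalue \<gamma> mstop (ent mstop) n x \<le> ent_value n x"
    unfolding ent_value_def by (rule dvalue_mono[OF assms(2) weighted_ent_mstop_le[OF assms(1)]])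
  also have "\<dots> \<le> ennreal K" by (rule not_stopped_imp_ent_value_le[OF assms False])
  finally show ?thesis .
qed

text \<open>Before \<open>t\<close> the sequence is undistorted, so one step back only discounts the bound.\<close>
lemma dvalue_ent_mstop_le_step_back:
  assumes "n < t" "x \<in> Hist (Suc n)"
    and le: "\<And>z. z \<in> Hist (Suc (Suc n)) \<Longrightarrow> dvalue \<gamma> mstop (ent mstop) (Suc n) z \<le> ennreal K"
  shows "dvalue \<gamma> mstop (ent mstop) n x \<le> ennreal K"
proof -
  have "step (\<lambda>r. ennreal (relM mstop n 1 r) * dvalue \<gamma> mstop (ent mstop) (Suc n) r) x \<le> step (\<lambda>_. ennreal K) x"
  proof (rule step_mono[OF assms(2)])
    fix a y assume "a \<in> space MX" "y \<in> Y"
    moreover have "relM mstop n 1 (x @ [(a, y)]) = 1"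
      unfolding relM_1 mstop_def using assms(1,2) by (simp add: Hist_iff nth_append)
    ultimately show "ennreal (relM mstop n 1 (x @ [(a, y)])) * dvalue \<gamma> mstop (ent mstop) (Suc n) (x @ [(a, y)])
        \<le> ennreal K"
      using le[OF Hist_snoc[OF assms(2)]] by simp
  qed
  moreover have "ent mstop n x = 0" unfolding ent_def mstop_def using assms(1) by simp
  ultimately have "dvalue \<gamma> mstop (ent mstop) n x \<le> ennreal \<gamma> * ennreal K"
    using dvalue_Bellman[OF mstop_in_Dist ent_adapted[OF mstop_in_Dist] ent_nonneg[OF mstop_in_Dist] \<gamma>_nonneg assms(2)]
      step_const[OF assms(2)] by (simp add: mult_left_mono)
  also have "\<dots> \<le> ennreal K"
    using \<gamma>_nonneg \<gamma>_less_1 K_nonneg by (simp add: ennreal_mult'[symmetric] mult_left_le_one_le ennreal_leI)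
  finally show ?thesis .
qed

lemma dvalue_ent_mstop_le:
  assumes "x \<in> Hist (Suc n)"
  shows "dvalue \<gamma> mstop (ent mstop) n x \<le> ennreal K"
proof -
  have "\<forall>x\<in>Hist (Suc n). dvalue \<gamma> mstop (ent mstop) n x \<le> ennreal K" if "n \<le> t" for n
    using that
  proof (induction n rule: inc_induct)
    case base
    then show ?case using dvalue_ent_mstop_le_from_start by blast
  next
    case (step n)
    then show ?case using dvalue_ent_mstop_le_step_back by blast
  qed
  then show ?thesis using dvalue_ent_mstop_le_from_start assms by (cases "n \<le> t") auto
qed

lemma mstop_in_MM: "mstop \<in> MM Y P MX \<gamma> K"
  unfolding MM_def
proof (safe intro!: mstop_in_Dist)
  fix n x assume x: "x \<in> Hist (Suc n)"
  have "DS Y P MX \<gamma> (\<lambda>j h'. relM mstop n j h' * Ent Y P (mstop (Suc (n + j)) h') (snd (last h'))) x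
      = enn2ereal (dvalue \<gamma> mstop (ent mstop) n x)"
    unfolding ent_def[abs_def] by (rule DS_Ent_eq_dvalue[OF mstop_in_Dist x \<gamma>_nonneg])
  also have "\<dots> \<le> ereal K"
    using dvalue_ent_mstop_le[OF x] K_nonneg by (simp add: less_eq_ennreal.rep_eq)
  finally show "DS Y P MX \<gamma> (\<lambda>j h'. relM mstop n j h' * Ent Y P (mstop (Suc (n + j)) h') (snd (last h'))) x
      \<le> ereal K" .
qed

lemma mstop_minimal: "m \<in> Dist Y P MX \<Longrightarrow> SPMA Y P MX \<gamma> \<theta> c t mstop h \<le> SPMA Y P MX \<gamma> \<theta> c t m h"
  using SPMA_mstop_le mopt_minimal by (rule order.trans)

end

theorem lemmaS1:
  fixes Y :: "real set" and P :: "real \<Rightarrow> real \<Rightarrow> real" and MX :: "'x measure"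
    and \<gamma> \<theta> C :: real and c :: "nat \<Rightarrow> ('x \<times> real) list \<Rightarrow> real"
  assumes Y: "finite Y" "Y \<noteq> {}" "\<forall>y\<in>Y. 0 \<le> y"
    and P: "\<forall>y\<in>Y. \<forall>y'\<in>Y. 0 \<le> P y y'" "\<forall>y\<in>Y. (\<Sum>y'\<in>Y. P y y') = 1"
    and MX: "prob_space MX"
    and \<gamma>: "0 < \<gamma>" "\<gamma> < 1"
    and \<theta>: "0 < \<theta>"
    and feasible: "\<forall>t. hist_measurable Y MX (Suc t) (c t)"
    and bounded: "\<forall>t. \<forall>h\<in>hist Y MX (Suc t). \<bar>c t h\<bar> \<le> C"
    and attained: "\<forall>t. \<forall>h\<in>hist Y MX (Suc t). \<exists>m\<in>Dist Y P MX.
        \<forall>m'\<in>Dist Y P MX. SPMA Y P MX \<gamma> \<theta> c t m h \<le> SPMA Y P MX \<gamma> \<theta> c t m' h"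
  shows "\<forall>t. \<forall>h\<in>hist Y MX (Suc t).
      (INF m\<in>MM Y P MX \<gamma> (2 * C / ((1 - \<gamma>) * \<theta> * \<gamma>)). SPMA Y P MX \<gamma> \<theta> c t m h)
        = (INF m\<in>Dist Y P MX. SPMA Y P MX \<gamma> \<theta> c t m h)
    \<and> (\<exists>m\<in>MM Y P MX \<gamma> (2 * C / ((1 - \<gamma>) * \<theta> * \<gamma>)).
        \<forall>m'\<in>Dist Y P MX. SPMA Y P MX \<gamma> \<theta> c t m h \<le> SPMA Y P MX \<gamma> \<theta> c t m' h)"
proof (intro allI ballI)
  fix t h assume h: "h \<in> hist Y MX (Suc t)"
  interpret markov_histories Y P MX
    by (rule markov_histories.intro) (use Y P MX in auto)
  obtain mopt where "mopt \<in> Dist Y P MX"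
    and "\<And>m. m \<in> Dist Y P MX \<Longrightarrow> SPMA Y P MX \<gamma> \<theta> c t mopt h \<le> SPMA Y P MX \<gamma> \<theta> c t m h"
    using attained h by blast
  moreover have "0 \<le> C" using bounded h by (meson abs_ge_zero order.trans)
  ultimately interpret stopped_minimiser Y P MX \<gamma> \<theta> C c t h mopt
    by (intro stopped_minimiser.intro markov_histories_axioms stopped_minimiser_axioms.intro)
       (use \<gamma> \<theta> feasible bounded h in \<open>auto simp: hist_measurable_iff_adapted[symmetric]\<close>)
  have MM_sub: "MM Y P MX \<gamma> K \<subseteq> Dist Y P MX" unfolding MM_def by auto
  show "(INF m\<in>MM Y P MX \<gamma> (2 * C / ((1 - \<gamma>) * \<theta> * \<gamma>)). SPMA Y P MX \<gamma> \<theta> c t m h)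
        = (INF m\<in>Dist Y P MX. SPMA Y P MX \<gamma> \<theta> c t m h)
    \<and> (\<exists>m\<in>MM Y P MX \<gamma> (2 * C / ((1 - \<gamma>) * \<theta> * \<gamma>)).
        \<forall>m'\<in>Dist Y P MX. SPMA Y P MX \<gamma> \<theta> c t m h \<le> SPMA Y P MX \<gamma> \<theta> c t m' h)"
    using INF_eq_if_minimiser_in_subset[where f="\<lambda>m. SPMA Y P MX \<gamma> \<theta> c t m h", OF MM_sub mstop_in_MM mstop_minimal]
      mstop_in_MM mstop_minimal
    unfolding K_def by blast
qed

end
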